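(* Let $X, Y, Z, W$ be Polish spaces, let $P: X \rightsquigarrow Y$ and $Q: Y \rightsquigarrow Z$ be tight Feller kernels, and let $S \subseteq Z \times W$ be closed. For risk budgets $\delta, \epsilon \ge 0$ with $\delta + \epsilon < 1$, $$P^{*,\delta}(Q^{*,\epsilon} S) \subseteq (Q \circ P)^{*,\delta+\epsilon} S.$$
   Context: A Markov kernel $P: X \rightsquigarrow Y$ assigns to each $x$ a Borel probability measure $P(x,\cdot)$ on $Y$ with $x \mapsto P(x,A)$ measurable for each Borel $A$. It is Feller if $x \mapsto \int \phi(y)\,P(x,dy)$ is continuous for every bounded continuous $\phi$, and tight if for every compact $K \subseteq X$ and $\eta > 0$ there is a compact $L \subseteq Y$ with $P(x,L) \ge 1-\eta$ for all $x \in K$. Composition: $(Q \circ P)(x,C) = \int_Y Q(y,C)\,P(x,dy)$. For a relation $S \subseteq Y \times Z$ and $\epsilon \in [0,1)$, the $\epsilon$-pullback along $P$ is $P^{*,\epsilon} S = \{(x,z) \in X \times Z : P(x, S_z) \ge 1-\epsilon\}$, where $S_z = \{y : (y,z) \in S\}$. *)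

theory Defs
  imports "HOL-Probability.Probability"
begin

definition markov_kernel :: "('a::topological_space \<Rightarrow> 'b::topological_space measure) \<Rightarrow> bool" where
  "markov_kernel P \<longleftrightarrow>
     (\<forall>x. prob_space (P x) \<and> sets (P x) = sets borel) \<and>
     (\<forall>A \<in> sets borel. (\<lambda>x. measure (P x) A) \<in> borel_measurable borel)"

definition feller :: "('a::topological_space \<Rightarrow> 'b::metric_space measure) \<Rightarrow> bool" where
  "feller P \<longleftrightarrow>
     (\<forall>\<phi> :: 'b \<Rightarrow> real. continuous_on UNIV \<phi> \<and> bounded (range \<phi>) \<longrightarrow>
        continuous_on UNIV (\<lambda>x. \<integral>y. \<phi> y \<partial>(P x)))"

definition tight_kernel :: "('a::topological_space \<Rightarrow> 'b::topological_space measure) \<Rightarrow> bool" where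
  "tight_kernel P \<longleftrightarrow>
     (\<forall>K. compact K \<longrightarrow> (\<forall>\<eta>>0. \<exists>L. compact L \<and> (\<forall>x\<in>K. measure (P x) L \<ge> 1 - \<eta>)))"

definition kcomp :: "('b \<Rightarrow> 'c::topological_space measure) \<Rightarrow> ('a \<Rightarrow> 'b measure) \<Rightarrow> 'a \<Rightarrow> 'c measure" where
  "kcomp Q P x = measure_of UNIV (sets borel) (\<lambda>C. \<integral>\<^sup>+ y. emeasure (Q y) C \<partial>(P x))"

definition pullback :: "('a \<Rightarrow> 'b measure) \<Rightarrow> real \<Rightarrow> ('b \<times> 'c) set \<Rightarrow> ('a \<times> 'c) set" where
  "pullback P \<epsilon> S = {(x, z). measure (P x) {y. (y, z) \<in> S} \<ge> 1 - \<epsilon>}"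

end

theory Submission
  imports Defs
begin

(* On the set where Q(y, S_w) \<ge> 1 - \<epsilon>, which has P(x, -)-mass at least 1 - \<delta>,
   the integrand is at least 1 - \<epsilon>, so (Q \<circ> P)(x, S_w) \<ge> (1 - \<epsilon>)(1 - \<delta>) \<ge> 1 - (\<delta> + \<epsilon>). *)

lemma markov_kernel_prob_space: "markov_kernel P \<Longrightarrow> prob_space (P x)"
  unfolding markov_kernel_def by blast

lemma sets_markov_kernel: "markov_kernel P \<Longrightarrow> sets (P x) = sets borel"
  unfolding markov_kernel_def by blast

lemma emeasure_markov_kernel: "markov_kernel P \<Longrightarrow> emeasure (P x) A = ennreal (measure (P x) A)"
  by (simp add: markov_kernel_prob_space prob_space.finite_measure finite_measure.emeasure_eq_measure)

lemma emeasure_UNIV_markov_kernel: "markov_kernel P \<Longrightarrow> emeasure (P x) UNIV = 1"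
  using prob_space.emeasure_space_1[OF markov_kernel_prob_space]
    sets_eq_imp_space_eq[OF sets_markov_kernel] by fastforce

lemma borel_measurable_emeasure_markov_kernel:
  assumes "markov_kernel P" "A \<in> sets borel"
  shows "(\<lambda>x. emeasure (P x) A) \<in> borel_measurable borel"
proof -
  have "(\<lambda>x. measure (P x) A) \<in> borel_measurable borel"
    using assms unfolding markov_kernel_def by blast
  then show ?thesis
    by (simp add: emeasure_markov_kernel[OF assms(1)])
qed

lemma emeasure_kcomp:
  fixes P :: "'a::topological_space \<Rightarrow> 'b::topological_space measure"
    and Q :: "'b \<Rightarrow> 'c::topological_space measure"
  assumes P: "markov_kernel P" and Q: "markov_kernel Q" and C: "C \<in> sets borel"
  shows "emeasure (kcomp Q P x) C = (\<integral>\<^sup>+ y. emeasure (Q y) C \<partial>P x)"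
proof -
  have meas: "(\<lambda>y. emeasure (Q y) A) \<in> borel_measurable (P x)" if "A \<in> sets borel" for A
    using borel_measurable_emeasure_markov_kernel[OF Q that]
    by (subst measurable_cong_sets[OF sets_markov_kernel[OF P] refl])
  have "countably_additive (sets borel) (\<lambda>C. \<integral>\<^sup>+ y. emeasure (Q y) C \<partial>P x)"
  proof (rule countably_additiveI)
    fix A :: "nat \<Rightarrow> 'c set"
    assume A: "range A \<subseteq> sets borel" "disjoint_family A"
    have "(\<Sum>i. \<integral>\<^sup>+ y. emeasure (Q y) (A i) \<partial>P x) = (\<integral>\<^sup>+ y. (\<Sum>i. emeasure (Q y) (A i)) \<partial>P x)"
      using A meas by (intro nn_integral_suminf[symmetric]) auto
    also have "\<dots> = (\<integral>\<^sup>+ y. emeasure (Q y) (\<Union>i. A i) \<partial>P x)"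
      using A sets_markov_kernel[OF Q] by (intro nn_integral_cong suminf_emeasure) auto
    finally show "(\<Sum>i. \<integral>\<^sup>+ y. emeasure (Q y) (A i) \<partial>P x) = (\<integral>\<^sup>+ y. emeasure (Q y) (\<Union>i. A i) \<partial>P x)" .
  qed
  moreover have "sigma_algebra UNIV (sets borel)"
    by (metis sets.sigma_algebra_axioms space_borel)
  ultimately show ?thesis
    unfolding kcomp_def using C by (intro emeasure_measure_of_sigma) (auto simp: positive_def)
qed

lemma prob_space_kcomp:
  assumes "markov_kernel P" "markov_kernel Q"
  shows "prob_space (kcomp Q P x)"
proof (rule prob_spaceI)
  have "emeasure (kcomp Q P x) UNIV = (\<integral>\<^sup>+ y. 1 \<partial>P x)"
    using assms by (simp add: emeasure_kcomp emeasure_UNIV_markov_kernel)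
  also have "\<dots> = 1"
    using assms(1) sets_eq_imp_space_eq[OF sets_markov_kernel[OF assms(1)]]
    by (simp add: emeasure_UNIV_markov_kernel)
  finally show "emeasure (kcomp Q P x) (space (kcomp Q P x)) = 1"
    by (simp add: kcomp_def)
qed

lemma measure_kcomp_ge:
  assumes P: "markov_kernel P" and Q: "markov_kernel Q"
    and C: "C \<in> sets borel" and A: "A \<in> sets borel"
    and "c \<ge> 0" and bound: "\<And>y. y \<in> A \<Longrightarrow> c \<le> measure (Q y) C"
  shows "c * measure (P x) A \<le> measure (kcomp Q P x) C"
proof -
  have "ennreal (c * measure (P x) A) = ennreal c * emeasure (P x) A"
    using \<open>c \<ge> 0\<close> by (simp add: ennreal_mult emeasure_markov_kernel[OF P])
  also have "\<dots> = (\<integral>\<^sup>+ y. ennreal c * indicator A y \<partial>P x)"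
    using A sets_markov_kernel[OF P] by (simp add: nn_integral_cmult_indicator)
  also have "\<dots> \<le> (\<integral>\<^sup>+ y. emeasure (Q y) C \<partial>P x)"
    using bound by (intro nn_integral_mono) (auto simp: indicator_def emeasure_markov_kernel[OF Q])
  also have "\<dots> = ennreal (measure (kcomp Q P x) C)"
    using P Q C prob_space_kcomp[OF P Q]
    by (simp add: emeasure_kcomp[symmetric] prob_space.finite_measure finite_measure.emeasure_eq_measure)
  finally show ?thesis
    using \<open>c \<ge> 0\<close> by (simp add: ennreal_le_iff)
qed

lemma pullback_pullback_subset_kcomp:
  assumes P: "markov_kernel P" and Q: "markov_kernel Q"
    and sections: "\<And>w. {z. (z, w) \<in> S} \<in> sets borel"
    and "\<delta> \<ge> 0" "\<epsilon> \<ge> 0" "\<epsilon> \<le> 1"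
  shows "pullback P \<delta> (pullback Q \<epsilon> S) \<subseteq> pullback (kcomp Q P) (\<delta> + \<epsilon>) S"
proof (clarsimp simp: pullback_def)
  fix x w
  define C where "C = {z. (z, w) \<in> S}"
  define A where "A = {y. 1 - \<epsilon> \<le> measure (Q y) C}"
  assume "1 - \<delta> \<le> measure (P x) {y. 1 - \<epsilon> \<le> measure (Q y) {z. (z, w) \<in> S}}"
  then have PA: "1 - \<delta> \<le> measure (P x) A"
    by (simp add: A_def C_def)
  have C_borel: "C \<in> sets borel"
    using sections by (simp add: C_def)
  have "(\<lambda>y. measure (Q y) C) \<in> borel_measurable borel"
    using Q C_borel unfolding markov_kernel_def by blast
  then have "A \<in> sets borel"
    unfolding A_def by measurable
  have "1 - (\<delta> + \<epsilon>) \<le> (1 - \<epsilon>) * (1 - \<delta>)"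
    using \<open>\<delta> \<ge> 0\<close> \<open>\<epsilon> \<ge> 0\<close> by (simp add: algebra_simps)
  also have "\<dots> \<le> (1 - \<epsilon>) * measure (P x) A"
    using PA \<open>\<epsilon> \<le> 1\<close> by (intro mult_left_mono) auto
  also have "\<dots> \<le> measure (kcomp Q P x) C"
    using P Q C_borel \<open>A \<in> sets borel\<close> \<open>\<epsilon> \<le> 1\<close> by (intro measure_kcomp_ge) (auto simp: A_def)
  finally show "1 - (\<delta> + \<epsilon>) \<le> measure (kcomp Q P x) {z. (z, w) \<in> S}"
    by (simp add: C_def)
qed

lemma closed_section_left: "closed S \<Longrightarrow> closed {z. (z, w) \<in> S}"
  using closed_vimage[of S "\<lambda>z. (z, w)"] by (simp add: continuous_on_Pair vimage_def)

theorem mainTheorem15: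
  fixes P :: "'x::polish_space \<Rightarrow> 'y::polish_space measure"
    and Q :: "'y \<Rightarrow> 'z::polish_space measure"
    and S :: "('z \<times> 'w::polish_space) set"
    and \<delta> \<epsilon> :: real
  assumes "markov_kernel P" "feller P" "tight_kernel P"
    and "markov_kernel Q" "feller Q" "tight_kernel Q"
    and "closed S"
    and "\<delta> \<ge> 0" "\<epsilon> \<ge> 0" "\<delta> + \<epsilon> < 1"
  shows "pullback P \<delta> (pullback Q \<epsilon> S) \<subseteq> pullback (kcomp Q P) (\<delta> + \<epsilon>) S"
  using assms(1,4,8-10) closed_section_left[OF \<open>closed S\<close>]
  by (intro pullback_pullback_subset_kcomp) auto

end
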